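(* Let $q$ be a self-join-free Boolean conjunctive query and let $\mathbf{db}$ be a database. Let $A,B\in\mathbf{db}$. (1) If $A\hookrightarrow B$, then $A\hookrightarrow B'$ for every fact $B'\in\mathbf{db}$ key-equal to $B$. (2) If $A\hookrightarrow B$, $A\hookrightarrow B'$ and $\mathrm{atom}(B)=\mathrm{atom}(B')$, then $B$ and $B'$ are key-equal.
   Context: Every relation name has a signature $[n,k]$ ($1\le k\le n$; primary-key positions $1,\dots,k$) and a mode in $\{\mathsf{c},\mathsf{i}\}$. For an atom $F$, $\mathrm{key}(F)$ = variables at primary-key positions, $\mathrm{vars}(F)$ = all its variables. Facts are variable-free atoms; facts are key-equal if same relation name and same primary-key values. A database is a finite set of facts with no two distinct key-equal facts of mode $\mathsf{c}$; all relation names of facts in $\mathbf{db}$ occur in $q$. A self-join-free Boolean conjunctive query is a finite set of atoms with distinct relation names. For a fact $A$, $\mathrm{atom}(A)$ is the atom of $q$ with the same relation name. $\mathcal{K}(p)=\{\mathrm{key}(F)\to\mathrm{vars}(F)\mid F\in p\}$ (FDs over variables), $q^{\mathsf{c}}$ = atoms of $q$ of mode $\mathsf{c}$. The M-graph of $q$: vertices atoms of $q$, edge $F\to G$ ($F\ne G$) iff $\mathcal{K}(q^{\mathsf{c}})\models\mathrm{vars}(F)\to\mathrm{key}(G)$. The $\hookrightarrow$-graph of $\mathbf{db}$ has the facts of $\mathbf{db}$ as vertices and an edge $A\hookrightarrow B$ iff there are a valuation $\theta$ of the variables of $q$ and an M-graph edge $F\to G$ with $\theta(q)\subseteq\mathbf{db}$,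 $A=\theta(F)$ and $B$ key-equal to $\theta(G)$. *)

theory Defs
  imports Main
begin

text \<open>Terms at atom positions: variables or constants. Relation names have type 'r,
  a signature function sig :: 'r => nat * nat gives (n,k), and md :: 'r => mode gives the mode.\<close>

datatype ('v,'c) trm = Var 'v | Cst 'c

datatype mode = ModeC | ModeI

type_synonym ('r,'v,'c) atom = "'r \<times> ('v,'c) trm list"
type_synonym ('r,'c) fact = "'r \<times> 'c list"

definition arity :: "('r \<Rightarrow> nat \<times> nat) \<Rightarrow> 'r \<Rightarrow> nat" where
  "arity sig r = fst (sig r)"

definition keylen :: "('r \<Rightarrow> nat \<times> nat) \<Rightarrow> 'r \<Rightarrow> nat" where
  "keylen sig r = snd (sig r)"

definition key_vars :: "('r \<Rightarrow> nat \<times> nat) \<Rightarrow> ('r,'v,'c) atom \<Rightarrow> 'v set" where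
  "key_vars sig F = {v. Var v \<in> set (take (keylen sig (fst F)) (snd F))}"

definition vars :: "('r,'v,'c) atom \<Rightarrow> 'v set" where
  "vars F = {v. Var v \<in> set (snd F)}"

definition fact_key :: "('r \<Rightarrow> nat \<times> nat) \<Rightarrow> ('r,'c) fact \<Rightarrow> 'c list" where
  "fact_key sig A = take (keylen sig (fst A)) (snd A)"

definition key_equal :: "('r \<Rightarrow> nat \<times> nat) \<Rightarrow> ('r,'c) fact \<Rightarrow> ('r,'c) fact \<Rightarrow> bool" where
  "key_equal sig A B \<longleftrightarrow> fst A = fst B \<and> fact_key sig A = fact_key sig B"

definition inst :: "('v \<Rightarrow> 'c) \<Rightarrow> ('r,'v,'c) atom \<Rightarrow> ('r,'c) fact" where
  "inst \<theta> F = (fst F, map (\<lambda>t. case t of Var v \<Rightarrow> \<theta> v | Cst c \<Rightarrow> c) (snd F))"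

definition wf_sig :: "('r \<Rightarrow> nat \<times> nat) \<Rightarrow> bool" where
  "wf_sig sig \<longleftrightarrow> (\<forall>r. 1 \<le> keylen sig r \<and> keylen sig r \<le> arity sig r)"

definition sjf_query :: "('r \<Rightarrow> nat \<times> nat) \<Rightarrow> ('r,'v,'c) atom set \<Rightarrow> bool" where
  "sjf_query sig q \<longleftrightarrow> finite q
     \<and> (\<forall>F\<in>q. \<forall>G\<in>q. fst F = fst G \<longrightarrow> F = G)
     \<and> (\<forall>F\<in>q. length (snd F) = arity sig (fst F))"

definition database :: "('r \<Rightarrow> nat \<times> nat) \<Rightarrow> ('r \<Rightarrow> mode) \<Rightarrow> ('r,'v,'c) atom set
      \<Rightarrow> ('r,'c) fact set \<Rightarrow> bool" where
  "database sig md q db \<longleftrightarrow> finite db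
     \<and> (\<forall>A\<in>db. length (snd A) = arity sig (fst A))
     \<and> (\<forall>A\<in>db. \<forall>B\<in>db. md (fst A) = ModeC \<and> key_equal sig A B \<longrightarrow> A = B)
     \<and> (\<forall>A\<in>db. \<exists>F\<in>q. fst F = fst A)"

definition atom_of :: "('r,'v,'c) atom set \<Rightarrow> ('r,'c) fact \<Rightarrow> ('r,'v,'c) atom" where
  "atom_of q A = (THE F. F \<in> q \<and> fst F = fst A)"

type_synonym 'v fd = "'v set \<times> 'v set"

definition Kfds :: "('r \<Rightarrow> nat \<times> nat) \<Rightarrow> ('r,'v,'c) atom set \<Rightarrow> 'v fd set" where
  "Kfds sig p = {(key_vars sig F, vars F) | F. F \<in> p}"

inductive_set fd_closure :: "'v fd set \<Rightarrow> 'v set \<Rightarrow> 'v set" for \<Sigma> X where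
  base: "x \<in> X \<Longrightarrow> x \<in> fd_closure \<Sigma> X"
| step: "(L, R) \<in> \<Sigma> \<Longrightarrow> (\<And>l. l \<in> L \<Longrightarrow> l \<in> fd_closure \<Sigma> X) \<Longrightarrow> y \<in> R \<Longrightarrow> y \<in> fd_closure \<Sigma> X"

definition fd_implies :: "'v fd set \<Rightarrow> 'v set \<Rightarrow> 'v set \<Rightarrow> bool" where
  "fd_implies \<Sigma> X Y \<longleftrightarrow> Y \<subseteq> fd_closure \<Sigma> X"

definition qc :: "('r \<Rightarrow> mode) \<Rightarrow> ('r,'v,'c) atom set \<Rightarrow> ('r,'v,'c) atom set" where
  "qc md q = {F \<in> q. md (fst F) = ModeC}"

definition mgraph_edge :: "('r \<Rightarrow> nat \<times> nat) \<Rightarrow> ('r \<Rightarrow> mode) \<Rightarrow> ('r,'v,'c) atom set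
      \<Rightarrow> ('r,'v,'c) atom \<Rightarrow> ('r,'v,'c) atom \<Rightarrow> bool" where
  "mgraph_edge sig md q F G \<longleftrightarrow> F \<in> q \<and> G \<in> q \<and> F \<noteq> G
     \<and> fd_implies (Kfds sig (qc md q)) (vars F) (key_vars sig G)"

definition hook :: "('r \<Rightarrow> nat \<times> nat) \<Rightarrow> ('r \<Rightarrow> mode) \<Rightarrow> ('r,'v,'c) atom set
      \<Rightarrow> ('r,'c) fact set \<Rightarrow> ('r,'c) fact \<Rightarrow> ('r,'c) fact \<Rightarrow> bool" where
  "hook sig md q db A B \<longleftrightarrow> A \<in> db \<and> B \<in> db \<and>
     (\<exists>(\<theta> :: 'v \<Rightarrow> 'c) F G. mgraph_edge sig md q F G \<and> inst \<theta> ` q \<subseteq> db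
        \<and> A = inst \<theta> F \<and> key_equal sig B (inst \<theta> G))"

end

theory Submission
  imports Defs
begin

text \<open>Part (1) holds because \<open>\<hookrightarrow>\<close> only constrains the target up to key-equality.
  For part (2), two witnesses for \<open>A \<hookrightarrow> B\<close> and \<open>A \<hookrightarrow> B'\<close> use the same M-graph edge
  \<open>F \<rightarrow> G\<close> (self-join-freeness), and their valuations agree on \<open>vars F\<close> since both map \<open>F\<close>
  to \<open>A\<close>. As \<open>db\<close> has no two distinct key-equal facts of mode \<open>c\<close>, two valuations embedding
  \<open>q\<close> into \<open>db\<close> that agree on the key of an atom of \<open>q\<^sup>c\<close> agree on all its variables;
  so their agreement propagates along \<open>\<K>(q\<^sup>c)\<close> to the closure of \<open>vars F\<close>, which
  contains \<open>key(G)\<close>. Hence both targets are key-equal to the same instance of \<open>G\<close>.\<close>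

lemma key_equal_sym: "key_equal sig A B \<Longrightarrow> key_equal sig B A"
  by (simp add: key_equal_def)

lemma key_equal_trans: "key_equal sig A B \<Longrightarrow> key_equal sig B C \<Longrightarrow> key_equal sig A C"
  by (simp add: key_equal_def)

lemma inst_eq_iff_agree_on_vars:
  "inst \<theta> F = inst \<theta>' F \<longleftrightarrow> (\<forall>v\<in>vars F. \<theta> v = \<theta>' v)"
  by (fastforce simp: inst_def vars_def split: trm.split)

lemma fact_key_inst_eq:
  assumes "\<forall>v\<in>key_vars sig G. \<theta> v = \<theta>' v"
  shows "fact_key sig (inst \<theta> G) = fact_key sig (inst \<theta>' G)"
  using assms by (fastforce simp: fact_key_def inst_def key_vars_def take_map
      split: trm.split)

lemma atom_of_eq:
  assumes "sjf_query sig q" "G \<in> q" "fst G = fst B"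
  shows "atom_of q B = G"
  unfolding atom_of_def using assms by (intro the_equality) (auto simp: sjf_query_def)

lemma database_embeddings_agree_on_consistent_atom:
  assumes "database sig md q db" "inst \<theta> ` q \<subseteq> db" "inst \<theta>' ` q \<subseteq> db"
    and "H \<in> qc md q" "\<forall>v\<in>key_vars sig H. \<theta> v = \<theta>' v"
  shows "\<forall>v\<in>vars H. \<theta> v = \<theta>' v"
proof -
  have "inst \<theta> H \<in> db" "inst \<theta>' H \<in> db" "md (fst (inst \<theta> H)) = ModeC"
    using assms(2-4) by (auto simp: qc_def inst_def)
  moreover have "key_equal sig (inst \<theta> H) (inst \<theta>' H)"
    using fact_key_inst_eq[OF assms(5)] by (simp add: key_equal_def inst_def)
  ultimately have "inst \<theta> H = inst \<theta>' H"
    using assms(1) unfolding database_def by blast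
  then show ?thesis by (simp add: inst_eq_iff_agree_on_vars)
qed

lemma database_embeddings_agree_on_fd_closure:
  assumes "database sig md q db" "inst \<theta> ` q \<subseteq> db" "inst \<theta>' ` q \<subseteq> db"
    and "\<forall>v\<in>X. \<theta> v = \<theta>' v"
    and "x \<in> fd_closure (Kfds sig (qc md q)) X"
  shows "\<theta> x = \<theta>' x"
  using assms(5)
proof (induction rule: fd_closure.induct)
  case (base x)
  then show ?case using assms(4) by blast
next
  case (step L R y)
  then obtain H where "H \<in> qc md q" "L = key_vars sig H" "R = vars H"
    by (auto simp: Kfds_def)
  then show ?case
    using database_embeddings_agree_on_consistent_atom[OF assms(1-3)] step by blast
qed

lemma hook_key_equal_target:
  assumes "hook sig md q db A B" "B' \<in> db" "key_equal sig B' B"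
  shows "hook sig md q db A B'"
  using assms unfolding hook_def by (metis key_equal_trans)

lemma hook_same_atom_key_equal:
  fixes q :: "('r,'v,'c) atom set"
  assumes q: "sjf_query sig q" and db: "database sig md q db"
    and hooks: "hook sig md q db A B" "hook sig md q db A B'"
    and atoms: "atom_of q B = atom_of q B'"
  shows "key_equal sig B B'"
proof -
  obtain \<theta> :: "'v \<Rightarrow> 'c" and F G where edge: "mgraph_edge sig md q F G"
    and emb: "inst \<theta> ` q \<subseteq> db" and A: "A = inst \<theta> F" and B: "key_equal sig B (inst \<theta> G)"
    using hooks(1) unfolding hook_def by blast
  obtain \<theta>' :: "'v \<Rightarrow> 'c" and F' G' where edge': "mgraph_edge sig md q F' G'"
    and emb': "inst \<theta>' ` q \<subseteq> db" and A': "A = inst \<theta>' F'" and B': "key_equal sig B' (inst \<theta>' G')"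
    using hooks(2) unfolding hook_def by blast
  have "atom_of q B = G"
    using atom_of_eq[OF q, of G B] edge B by (simp add: mgraph_edge_def key_equal_def inst_def)
  moreover have "atom_of q B' = G'"
    using atom_of_eq[OF q, of G' B'] edge' B' by (simp add: mgraph_edge_def key_equal_def inst_def)
  ultimately have "G' = G" using atoms by simp
  have "fst F' = fst F"
    using A A' by (simp add: inst_def)
  with q edge edge' have "F' = F"
    by (auto simp: sjf_query_def mgraph_edge_def)
  with A A' have "\<forall>v\<in>vars F. \<theta> v = \<theta>' v"
    by (simp add: inst_eq_iff_agree_on_vars)
  moreover have "key_vars sig G \<subseteq> fd_closure (Kfds sig (qc md q)) (vars F)"
    using edge by (simp add: mgraph_edge_def fd_implies_def)
  ultimately have "\<forall>v\<in>key_vars sig G. \<theta> v = \<theta>' v"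
    using database_embeddings_agree_on_fd_closure[OF db emb emb'] by blast
  then have "key_equal sig (inst \<theta> G) (inst \<theta>' G)"
    by (simp add: key_equal_def fact_key_inst_eq) (simp add: inst_def)
  with B have "key_equal sig B (inst \<theta>' G)" by (rule key_equal_trans)
  then show ?thesis
    using key_equal_sym[OF B'] \<open>G' = G\<close> by (simp add: key_equal_trans)
qed

theorem lemma13:
  fixes sig :: "'r \<Rightarrow> nat \<times> nat" and md :: "'r \<Rightarrow> mode"
    and q :: "('r,'v,'c) atom set" and db :: "('r,'c) fact set"
    and A B :: "('r,'c) fact"
  assumes "wf_sig sig" and "sjf_query sig q" and "database sig md q db"
    and "A \<in> db" and "B \<in> db"
  shows "(hook sig md q db A B \<longrightarrow> (\<forall>B'\<in>db. key_equal sig B' B \<longrightarrow> hook sig md q db A B'))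
       \<and> (\<forall>B'. hook sig md q db A B \<and> hook sig md q db A B' \<and> atom_of q B = atom_of q B'
              \<longrightarrow> key_equal sig B B')"
  using hook_key_equal_target hook_same_atom_key_equal[OF assms(2,3)] by blast

end
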